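(* Let $Q=\langle b\rangle\ltimes_{(g,\gamma)}X$ and let $r=r(g,\gamma)$. Then $$N(Q)=\{(b^i,x): x\in\mathrm{Rad}(\gamma)\text{ and either } i=0 \text{ or } r \text{ divides } i\},$$ $$Z(Q)=\{(b^i,x)\in N(Q): |g| \text{ divides } i \text{ and } g(x)=x\}.$$ (Here "$r$ divides $i$" is false for $r=\infty$, and "$|g|$ divides $i$" means $g^i=\mathrm{id}$.)
   Context: Let $(X,+)$ be an abelian group and $(g,\gamma)$ a construction pair on it: $g$ a permutation of $X$, $\gamma:X\times X\to X$ symmetric, alternating, biadditive, with (C1) $g^{-1}(g(x)+g(y))=x+y+\gamma(x,y)+g^{-1}(\gamma(x,y))+g^{-2}(\gamma(x,y))$, (C2) $\gamma(\gamma(x,y),z)=0$, (C3) $g^{-1}(\gamma(x,y))=\gamma(g(x),y)$ for all $x,y,z$. Let $\mathrm{Rad}(\gamma)=\{x:\gamma(x,y)=0\ \forall y\}$ and $r(g,\gamma)$ the least positive $r$ with $\sum_{0\le k<r}g^k(x)\in\mathrm{Rad}(\gamma)$ for all $x$ ($\infty$ if none). $I(i,j)$ is $\emptyset$ if $i=j$, $\{i,\dots,j-1\}$ if $i<j$, $\{j,\dots,i-1\}$ if $j<i$. For a cyclic group $C=\langle b\rangle$ such that (if finite) $|g|$ and $r(g,\gamma)$ divide $|C|$, $C\ltimes_{(g,\gamma)}X$ is the Moufang loop on $C\times X$ with multiplication $(b^i,x)(b^j,y)=(b^{i+j},g^{-j}(x)+y+\sum_{k\in I(i+j,-j)}g^{-k}(\gamma(x,y)))$.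 The nucleus $N(Q)$ of a loop is the set of $a$ with $a(yz)=(ay)z$, $y(az)=(ya)z$, $y(za)=(yz)a$ for all $y,z$; the center $Z(Q)$ is the set of $a\in N(Q)$ commuting with every element. *)

theory Defs
  imports Main "HOL-Library.Extended_Nat"
begin

definition gpow :: "('a \<Rightarrow> 'a) \<Rightarrow> int \<Rightarrow> 'a \<Rightarrow> 'a" where
  "gpow g k = (if 0 \<le> k then g ^^ nat k else inv g ^^ nat (- k))"

definition construction_pair :: "('a::ab_group_add \<Rightarrow> 'a) \<Rightarrow> ('a \<Rightarrow> 'a \<Rightarrow> 'a) \<Rightarrow> bool" where
  "construction_pair g \<gamma> \<longleftrightarrow>
     bij g \<and>
     (\<forall>x y. \<gamma> x y = \<gamma> y x) \<and>
     (\<forall>x. \<gamma> x x = 0) \<and>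
     (\<forall>x y z. \<gamma> (x + y) z = \<gamma> x z + \<gamma> y z) \<and>
     (\<forall>x y z. \<gamma> x (y + z) = \<gamma> x y + \<gamma> x z) \<and>
     (\<forall>x y. gpow g (-1) (g x + g y) =
              x + y + \<gamma> x y + gpow g (-1) (\<gamma> x y) + gpow g (-2) (\<gamma> x y)) \<and>
     (\<forall>x y z. \<gamma> (\<gamma> x y) z = 0) \<and>
     (\<forall>x y. gpow g (-1) (\<gamma> x y) = \<gamma> (g x) y)"

definition Rad :: "('a \<Rightarrow> 'a \<Rightarrow> 'a::zero) \<Rightarrow> 'a set" where
  "Rad \<gamma> = {x. \<forall>y. \<gamma> x y = 0}"

definition r_gg :: "('a::ab_group_add \<Rightarrow> 'a) \<Rightarrow> ('a \<Rightarrow> 'a \<Rightarrow> 'a) \<Rightarrow> enat" where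
  "r_gg g \<gamma> =
    (if \<exists>r::nat. 0 < r \<and> (\<forall>x. (\<Sum>k<r. (g ^^ k) x) \<in> Rad \<gamma>)
     then enat (LEAST r::nat. 0 < r \<and> (\<forall>x. (\<Sum>k<r. (g ^^ k) x) \<in> Rad \<gamma>))
     else \<infinity>)"

definition enat_dvd :: "enat \<Rightarrow> int \<Rightarrow> bool" where
  "enat_dvd r i \<longleftrightarrow> (\<exists>m. r = enat m \<and> int m dvd i)"

definition Iset :: "int \<Rightarrow> int \<Rightarrow> int set" where
  "Iset i j = (if i < j then {i..<j} else {j..<i})"

text \<open>The loop C \<ltimes>_(g,gamma) X, where C = <b> is cyclic of order n (n = 0 means infinite
  cyclic). The element (b^i, x) is represented by (i, x) with i an integer, reduced mod n
  when n > 0.\<close>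
definition sd_carrier :: "nat \<Rightarrow> (int \<times> 'a) set" where
  "sd_carrier n = {(i, x). n = 0 \<or> (0 \<le> i \<and> i < int n)}"

definition sd_mult :: "nat \<Rightarrow> ('a::ab_group_add \<Rightarrow> 'a) \<Rightarrow> ('a \<Rightarrow> 'a \<Rightarrow> 'a)
    \<Rightarrow> int \<times> 'a \<Rightarrow> int \<times> 'a \<Rightarrow> int \<times> 'a" where
  "sd_mult n g \<gamma> a c = (case a of (i, x) \<Rightarrow> case c of (j, y) \<Rightarrow>
     ((i + j) mod int n,
      gpow g (- j) x + y + (\<Sum>k\<in>Iset (i + j) (- j). gpow g (- k) (\<gamma> x y))))"

definition loop_nucleus :: "'b set \<Rightarrow> ('b \<Rightarrow> 'b \<Rightarrow> 'b) \<Rightarrow> 'b set" where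
  "loop_nucleus Q m = {a \<in> Q. \<forall>y\<in>Q. \<forall>z\<in>Q.
      m a (m y z) = m (m a y) z \<and> m y (m a z) = m (m y a) z \<and> m y (m z a) = m (m y z) a}"

definition loop_center :: "'b set \<Rightarrow> ('b \<Rightarrow> 'b \<Rightarrow> 'b) \<Rightarrow> 'b set" where
  "loop_center Q m = {a \<in> loop_nucleus Q m. \<forall>y\<in>Q. m a y = m y a}"

end

theory Submission
  imports Defs
begin

text \<open>
  Put \<open>\<Gamma> m x y = (\<Sum>k \<in> I(m,0). g^(-k) (\<gamma> x y)) = \<gamma> (\<Sum>k \<in> I(m,0). g^k x) y\<close>, so that
  \<open>(b^i, x) (b^j, y) = (b^(i+j), g^(-j) x + y + \<Gamma> (i+j) x y + \<Gamma> (-j) x y)\<close>.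
  The values of \<open>\<gamma>\<close> have exponent 2 and lie in \<open>Rad \<gamma>\<close>, on which every power of \<open>g\<close> is
  additive; hence \<open>\<Gamma>\<close> is biadditive, and \<open>\<Gamma> (m + t) = \<Gamma> m\<close> whenever \<open>r\<close> divides \<open>t\<close>.
  Iterating (C1) gives \<open>g^t (p + q) = g^t p + g^t q + \<Gamma> (2t) p q + \<Gamma> (-t) p q\<close>, so \<open>g^t\<close> is
  additive when \<open>r\<close> divides \<open>t\<close>. With these facts the three associativity laws for
  \<open>(b^i, x)\<close> with \<open>x \<in> Rad \<gamma>\<close> and \<open>r | i\<close> reduce to congruences of indices modulo \<open>r\<close>.
  Conversely, associating \<open>(b^i, x)\<close> with \<open>(1, u)\<close> and \<open>(1, v)\<close> forces \<open>\<Gamma> i u v = 0\<close>, i.e.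
  all orbit sums of length \<open>|i|\<close> lie in \<open>Rad \<gamma>\<close>, whence \<open>r | i\<close>; associating it with \<open>(b, 0)\<close>
  and \<open>(1, v)\<close> forces \<open>g^(-i) (\<gamma> x v) = 0\<close>, whence \<open>x \<in> Rad \<gamma>\<close>. For the centre,
  commuting with \<open>(1, u)\<close> gives \<open>g^i = id\<close> and commuting with \<open>(b, 0)\<close> gives \<open>g x = x\<close>.
\<close>

lemma gpow_of_nat: "gpow g (int m) = g ^^ m"
  by (simp add: gpow_def)

lemma gpow_uminus_of_nat: "gpow g (- int m) = inv g ^^ m"
  by (cases m) (auto simp: gpow_def nat_add_distrib funpow_Suc_right[symmetric] simp del: funpow.simps)

lemma gpow_0 [simp]: "gpow g 0 = id"
  by (simp add: gpow_def)

lemma gpow_1: "gpow g 1 = g"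
  by (simp add: gpow_def)

lemma gpow_minus_1: "gpow g (-1) = inv g"
  by (simp add: gpow_def)

lemma gpow_minus_2: "gpow g (-2) = inv g \<circ> inv g"
  by (simp add: gpow_def numeral_2_eq_2 fun_eq_iff)

lemma gpow_succ:
  assumes "bij g" shows "gpow g (a + 1) x = g (gpow g a x)"
proof (cases "0 \<le> a")
  case True
  then have "nat (a + 1) = Suc (nat a)" by simp
  with True show ?thesis by (simp add: gpow_def)
next
  case False
  define m where "m = nat (- a) - 1"
  have m: "a = - int (Suc m)" using False by (simp add: m_def)
  then have "gpow g (a + 1) = inv g ^^ m" by (simp add: gpow_uminus_of_nat)
  moreover have "gpow g a = inv g ^^ Suc m" by (simp only: m gpow_uminus_of_nat)
  ultimately show ?thesis using assms by (simp add: bij_is_surj surj_f_inv_f)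
qed

lemma gpow_pred:
  assumes "bij g" shows "gpow g (a - 1) x = inv g (gpow g a x)"
  using gpow_succ[OF assms, of "a - 1" x] assms by (simp add: bij_is_inj)

lemma gpow_gpow:
  assumes "bij g" shows "gpow g a (gpow g b x) = gpow g (a + b) x"
proof (induction a rule: int_induct[where k=0])
  case (step1 i)
  then show ?case by (metis gpow_succ[OF assms] add.commute add.left_commute)
next
  case (step2 i)
  then show ?case by (simp add: gpow_pred[OF assms] algebra_simps)
qed simp

lemma gpow_cancel:
  assumes "bij g" shows "gpow g (- a) (gpow g a x) = x" "gpow g a (gpow g (- a) x) = x"
  by (simp_all add: gpow_gpow[OF assms])

lemma gpow_fixed_point:
  assumes "bij g" "g x = x" shows "gpow g k x = x"
proof (induction k rule: int_induct[where k=0])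
  case (step2 i)
  have "inv g x = x" using assms by (metis bij_is_inj inv_f_f)
  with step2 show ?case by (simp add: gpow_pred[OF assms(1)])
qed (simp_all add: gpow_succ[OF assms(1)] assms(2))

lemma gpow_add_period:
  assumes "bij g" "gpow g m = id" shows "gpow g (a + m * z) = gpow g a"
proof -
  have "gpow g (m * z) = id"
  proof (induction z rule: int_induct[where k=0])
    case (step1 i)
    then show ?case using assms by (simp add: fun_eq_iff gpow_gpow[OF assms(1), symmetric] distrib_left)
  next
    case (step2 i)
    have "m * i = m + m * (i - 1)" by (simp add: algebra_simps)
    then have "gpow g (m * (i - 1)) x = gpow g (m * i) x" for x
      using assms by (simp add: gpow_gpow[OF assms(1), symmetric])
    with step2 show ?case by (simp add: fun_eq_iff)
  qed simp
  then show ?thesis by (simp add: fun_eq_iff gpow_gpow[OF assms(1), symmetric] add.commute)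
qed

lemma sum_Iset_succ:
  fixes f :: "int \<Rightarrow> 'a::ab_group_add"
  assumes f2: "\<And>k. f k + f k = 0"
  shows "sum f (Iset a (b + 1)) = sum f (Iset a b) + f b"
proof -
  consider "a \<le> b" | "a = b + 1" | "b + 1 < a" by linarith
  then show ?thesis
  proof cases
    case 1
    then have "{a..<b + 1} = insert b {a..<b}" by auto
    with 1 show ?thesis by (simp add: Iset_def add.commute)
  next
    case 2
    then have "{b..<a} = {b}" by auto
    with 2 show ?thesis by (simp add: Iset_def f2)
  next
    case 3
    then have "{b..<a} = insert b {b + 1..<a}" by auto
    with 3 show ?thesis by (simp add: Iset_def f2 add.assoc[symmetric])
  qed
qed

text \<open>\<open>Iset\<close> forgets the orientation of an interval, so this chain rule needs \<open>- f k = f k\<close>.\<close>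

lemma sum_Iset_split:
  fixes f :: "int \<Rightarrow> 'a::ab_group_add"
  assumes f2: "\<And>k. f k + f k = 0"
  shows "sum f (Iset a b) = sum f (Iset a c) + sum f (Iset c b)"
proof (induction b rule: int_induct[where k=c])
  case base
  then show ?case by (simp add: Iset_def)
next
  case (step1 i)
  then show ?case by (simp add: sum_Iset_succ[OF f2] add.assoc)
next
  case (step2 i)
  have "sum f (Iset s (i - 1)) = sum f (Iset s i) + f (i - 1)" for s
    using sum_Iset_succ[OF f2, where a = s and b = "i - 1"] f2[of "i - 1"]
    by (simp add: add.assoc[symmetric] eq_neg_iff_add_eq_0[symmetric])
  with step2 show ?case by (simp add: add.assoc)
qed

lemma Iset_commute: "Iset a b = Iset b a"
  by (auto simp: Iset_def)

lemma sum_Iset_shift: "(\<Sum>k\<in>Iset a b. f (k + t)) = (\<Sum>k\<in>Iset (a + t) (b + t). f k)"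
  by (rule sum.reindex_bij_witness[of _ "\<lambda>k. k - t" "\<lambda>k. k + t"])
     (auto simp: Iset_def split: if_splits)

locale constr_pair =
  fixes g :: "'a::ab_group_add \<Rightarrow> 'a" and \<gamma> :: "'a \<Rightarrow> 'a \<Rightarrow> 'a"
  assumes construction_pair: "construction_pair g \<gamma>"
begin

lemma bij: "bij g"
  using construction_pair unfolding construction_pair_def by blast

lemma gamma_sym: "\<gamma> x y = \<gamma> y x"
  using construction_pair unfolding construction_pair_def by blast

lemma gamma_self: "\<gamma> x x = 0"
  using construction_pair unfolding construction_pair_def by blast

lemma gamma_add_left: "\<gamma> (x + y) z = \<gamma> x z + \<gamma> y z"
  using construction_pair unfolding construction_pair_def by blast

lemma gamma_add_right: "\<gamma> x (y + z) = \<gamma> x y + \<gamma> x z"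
  using construction_pair unfolding construction_pair_def by blast

lemma inv_g_add: "inv g (g x + g y) = x + y + \<gamma> x y + inv g (\<gamma> x y) + inv g (inv g (\<gamma> x y))"
  using construction_pair by (simp add: construction_pair_def gpow_minus_1 gpow_minus_2)

lemma gamma_gamma: "\<gamma> (\<gamma> x y) z = 0"
  using construction_pair unfolding construction_pair_def by blast

lemma inv_g_gamma: "inv g (\<gamma> x y) = \<gamma> (g x) y"
  using construction_pair by (simp add: construction_pair_def gpow_minus_1)

lemma g_inv_g [simp]: "g (inv g x) = x"
  using bij by (simp add: bij_is_surj surj_f_inv_f)

lemma inv_g_g [simp]: "inv g (g x) = x"
  using bij by (simp add: bij_is_inj)

lemma gamma_0_left [simp]: "\<gamma> 0 y = 0"
  using gamma_add_left[of 0 0 y] by simp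

lemma gamma_0_right [simp]: "\<gamma> x 0 = 0"
  using gamma_add_right[of x 0 0] by simp

lemma gamma_sum_left: "\<gamma> (sum f S) y = (\<Sum>s\<in>S. \<gamma> (f s) y)"
  by (induction S rule: infinite_finite_induct) (simp_all add: gamma_add_left)

lemma gamma_add_self: "\<gamma> x y + \<gamma> x y = 0"
proof -
  have "0 = \<gamma> (x + y) (x + y)" by (simp add: gamma_self)
  also have "\<dots> = \<gamma> x x + \<gamma> x y + (\<gamma> y x + \<gamma> y y)"
    by (simp add: gamma_add_left gamma_add_right)
  also have "\<dots> = \<gamma> x y + \<gamma> x y"
    by (simp add: gamma_self gamma_sym[of y x])
  finally show ?thesis by simp
qed

lemma Rad_gamma_left: "x \<in> Rad \<gamma> \<Longrightarrow> \<gamma> x y = 0"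
  by (simp add: Rad_def)

lemma Rad_gamma_right: "y \<in> Rad \<gamma> \<Longrightarrow> \<gamma> x y = 0"
  by (simp add: Rad_def gamma_sym[of x y])

lemma Rad_add: "x \<in> Rad \<gamma> \<Longrightarrow> y \<in> Rad \<gamma> \<Longrightarrow> x + y \<in> Rad \<gamma>"
  by (simp add: Rad_def gamma_add_left)

lemma Rad_diff: "x \<in> Rad \<gamma> \<Longrightarrow> y \<in> Rad \<gamma> \<Longrightarrow> x - y \<in> Rad \<gamma>"
  using gamma_add_left[of "x - y" y] by (simp add: Rad_def)

lemma Rad_sum: "(\<And>s. s \<in> S \<Longrightarrow> f s \<in> Rad \<gamma>) \<Longrightarrow> sum f S \<in> Rad \<gamma>"
  by (simp add: Rad_def gamma_sum_left)

lemma gamma_in_Rad [simp]: "\<gamma> x y \<in> Rad \<gamma>"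
  by (simp add: Rad_def gamma_gamma)

lemma inv_g_0 [simp]: "inv g 0 = 0"
  using inv_g_gamma[of 0 0] by simp

lemma g_0 [simp]: "g 0 = 0"
  using g_inv_g[of 0] by simp

lemma g_add_Rad:
  assumes "x \<in> Rad \<gamma>" shows "g (x + y) = g x + g y"
proof -
  have "inv g (g x + g y) = x + y"
    using inv_g_add[of x y] Rad_gamma_left[OF assms] by simp
  then have "g (inv g (g x + g y)) = g (x + y)" by (rule arg_cong)
  then show ?thesis by simp
qed

lemma g_Rad: "x \<in> Rad \<gamma> \<Longrightarrow> g x \<in> Rad \<gamma>"
  by (simp add: Rad_def flip: inv_g_gamma)

lemma inv_g_Rad:
  assumes "x \<in> Rad \<gamma>" shows "inv g x \<in> Rad \<gamma>"
  unfolding Rad_def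
proof (intro CollectI allI)
  fix y
  have "inv g (\<gamma> (inv g x) y) = inv g 0"
    using inv_g_gamma[of "inv g x" y] Rad_gamma_left[OF assms] by simp
  then have "g (inv g (\<gamma> (inv g x) y)) = g (inv g 0)" by (rule arg_cong)
  then show "\<gamma> (inv g x) y = 0" by simp
qed

lemma inv_g_add_Rad:
  assumes "x \<in> Rad \<gamma>" shows "inv g (x + y) = inv g x + inv g y"
proof -
  have "g (inv g x + inv g y) = x + y"
    by (simp add: g_add_Rad[OF inv_g_Rad[OF assms]])
  then have "inv g (g (inv g x + inv g y)) = inv g (x + y)" by (rule arg_cong)
  then show ?thesis by simp
qed

lemma gpow_Rad: "x \<in> Rad \<gamma> \<Longrightarrow> gpow g k x \<in> Rad \<gamma>"
  by (induction k rule: int_induct[where k=0])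
     (simp_all add: gpow_succ[OF bij] gpow_pred[OF bij] g_Rad inv_g_Rad)

lemma gpow_add_Rad: "x \<in> Rad \<gamma> \<Longrightarrow> gpow g k (x + y) = gpow g k x + gpow g k y"
  by (induction k rule: int_induct[where k=0])
     (simp_all add: gpow_succ[OF bij] gpow_pred[OF bij] g_add_Rad inv_g_add_Rad gpow_Rad)

lemma gpow_add_Rad_right: "y \<in> Rad \<gamma> \<Longrightarrow> gpow g k (x + y) = gpow g k x + gpow g k y"
  using gpow_add_Rad[of y k x] by (simp add: add.commute)

lemma gpow_zero [simp]: "gpow g k 0 = 0"
  using gpow_add_Rad[of 0 k 0] by (simp add: Rad_def)

lemma gpow_sum_Rad:
  "(\<And>s. s \<in> S \<Longrightarrow> f s \<in> Rad \<gamma>) \<Longrightarrow> gpow g k (sum f S) = (\<Sum>s\<in>S. gpow g k (f s))"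
  by (induction S rule: infinite_finite_induct)
     (simp_all add: gpow_add_Rad)

lemma gpow_gamma: "gpow g (- k) (\<gamma> x y) = \<gamma> (gpow g k x) y"
proof (induction k rule: int_induct[where k=0])
  case (step1 i)
  have "gpow g (- (i + 1)) (\<gamma> x y) = inv g (gpow g (- i) (\<gamma> x y))"
    using gpow_pred[OF bij, of "- i"] by simp
  with step1 show ?case by (simp add: inv_g_gamma gpow_succ[OF bij])
next
  case (step2 i)
  define w where "w = gpow g (i - 1) x"
  have "gpow g (- (i - 1)) (\<gamma> x y) = g (gpow g (- i) (\<gamma> x y))"
    using gpow_succ[OF bij, of "- i"] by simp
  also have "\<dots> = g (\<gamma> (g w) y)"
    using step2(2) gpow_succ[OF bij, of "i - 1" x] by (simp add: w_def)
  also have "\<dots> = \<gamma> w y"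
    by (simp flip: inv_g_gamma)
  finally show ?case by (simp add: w_def)
qed simp

lemma gamma_gpow_right: "\<gamma> x (gpow g k y) = \<gamma> (gpow g k x) y"
proof -
  have "\<gamma> x (gpow g k y) = gpow g (- k) (\<gamma> y x)"
    by (simp only: gpow_gamma gamma_sym[of x])
  also have "\<dots> = \<gamma> (gpow g k x) y"
    by (simp only: gpow_gamma gamma_sym[of y x])
  finally show ?thesis .
qed

lemma gpow_gamma_add_self: "gpow g k (\<gamma> x y) + gpow g k (\<gamma> x y) = 0"
  using gpow_gamma[of "- k"] gamma_add_self by simp

definition \<Gamma> :: "int \<Rightarrow> 'a \<Rightarrow> 'a \<Rightarrow> 'a" where
  "\<Gamma> m x y = (\<Sum>k\<in>Iset m 0. gpow g (- k) (\<gamma> x y))"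

lemma Gamma_eq_gamma_sum: "\<Gamma> m x y = \<gamma> (\<Sum>k\<in>Iset m 0. gpow g k x) y"
  by (simp add: \<Gamma>_def gpow_gamma gamma_sum_left)

lemma Gamma_in_Rad [simp]: "\<Gamma> m x y \<in> Rad \<gamma>"
  by (simp add: \<Gamma>_def Rad_sum gpow_Rad)

lemma Gamma_add_self [simp]: "\<Gamma> m x y + \<Gamma> m x y = 0"
  by (simp add: \<Gamma>_def sum.distrib[symmetric] gpow_gamma_add_self)

lemma Gamma_add_left: "\<Gamma> m (x + x') y = \<Gamma> m x y + \<Gamma> m x' y"
  by (simp add: \<Gamma>_def gamma_add_left gpow_add_Rad sum.distrib)

lemma Gamma_add_right: "\<Gamma> m x (y + y') = \<Gamma> m x y + \<Gamma> m x y'"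
  by (simp add: \<Gamma>_def gamma_add_right gpow_add_Rad sum.distrib)

lemma Gamma_Rad_left: "x \<in> Rad \<gamma> \<Longrightarrow> \<Gamma> m x y = 0"
  by (simp add: \<Gamma>_def Rad_gamma_left)

lemma Gamma_Rad_right: "y \<in> Rad \<gamma> \<Longrightarrow> \<Gamma> m x y = 0"
  by (simp add: \<Gamma>_def Rad_gamma_right)

lemma Gamma_zero_left [simp]: "\<Gamma> m 0 y = 0"
  by (simp add: \<Gamma>_def)

lemma Gamma_zero_right [simp]: "\<Gamma> m x 0 = 0"
  by (simp add: \<Gamma>_def)

lemma Gamma_0 [simp]: "\<Gamma> 0 x y = 0"
  by (simp add: \<Gamma>_def Iset_def)

lemma sum_Iset_gamma: "(\<Sum>k\<in>Iset a b. gpow g (- k) (\<gamma> x y)) = \<Gamma> a x y + \<Gamma> b x y"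
  using sum_Iset_split[of "\<lambda>k. gpow g (- k) (\<gamma> x y)" a b 0]
  by (simp add: \<Gamma>_def gpow_gamma_add_self Iset_commute[of 0 b])

lemma Gamma_succ: "\<Gamma> (m + 1) x y = gpow g (- m) (\<gamma> x y) + \<Gamma> m x y"
  using sum_Iset_succ[of "\<lambda>k. gpow g (- k) (\<gamma> x y)" 0 m]
  by (simp add: \<Gamma>_def gpow_gamma_add_self Iset_commute[of 0] add.commute)

lemma Gamma_gpow_left: "\<Gamma> m (gpow g j x) y = \<Gamma> (m + j) x y + \<Gamma> j x y"
proof -
  have "\<Gamma> m (gpow g j x) y = (\<Sum>k\<in>Iset m 0. gpow g (- (k + j)) (\<gamma> x y))"
    unfolding \<Gamma>_def
    by (rule sum.cong) (simp_all add: gpow_gamma[symmetric] gpow_gpow[OF bij] algebra_simps)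
  also have "\<dots> = (\<Sum>k\<in>Iset (m + j) j. gpow g (- k) (\<gamma> x y))"
    using sum_Iset_shift[where f = "\<lambda>k. gpow g (- k) (\<gamma> x y)" and a = m and b = 0 and t = j]
    by simp
  finally show ?thesis by (simp add: sum_Iset_gamma)
qed

lemma Gamma_gpow_right: "\<Gamma> m x (gpow g j y) = \<Gamma> (m + j) x y + \<Gamma> j x y"
  by (simp add: \<Gamma>_def gamma_gpow_right Gamma_gpow_left[unfolded \<Gamma>_def])

lemma gpow_Gamma: "gpow g (- t) (\<Gamma> m x y) = \<Gamma> m (gpow g t x) y"
  unfolding \<Gamma>_def
  by (simp add: gpow_sum_Rad gpow_Rad gpow_gpow[OF bij] add.commute flip: gpow_gamma)

lemma sd_mult_Gamma:
  "sd_mult n g \<gamma> (i, x) (j, y) = ((i + j) mod int n, gpow g (- j) x + y + \<Gamma> (i + j) x y + \<Gamma> (- j) x y)"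
  by (simp add: sd_mult_def sum_Iset_gamma add.assoc)

lemma Gamma_uminus [simp]: "- \<Gamma> m x y = \<Gamma> m x y"
  by (rule minus_unique[OF Gamma_add_self])

lemma g_Gamma: "g (\<Gamma> m x y) = \<Gamma> (m - 1) x y + \<Gamma> (- 1) x y"
  using gpow_Gamma[of "- 1" m x y] by (simp add: gpow_1 Gamma_gpow_left)

lemma Gamma_gpow_both: "\<Gamma> m (gpow g j x) (gpow g j y) = \<Gamma> (m + 2 * j) x y + \<Gamma> (2 * j) x y"
proof -
  have "\<Gamma> m (gpow g j x) (gpow g j y) = \<Gamma> (m + j + j) x y + \<Gamma> j x y + (\<Gamma> (j + j) x y + \<Gamma> j x y)"
    by (simp add: Gamma_gpow_left Gamma_gpow_right)
  also have "\<dots> = \<Gamma> (m + 2 * j) x y + \<Gamma> (2 * j) x y"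
    by (simp add: algebra_simps mult_2)
  finally show ?thesis .
qed

lemma g_add: "g (p + q) = g p + g q + \<Gamma> 2 p q + \<Gamma> (- 1) p q"
proof -
  define c where "c = \<gamma> p q"
  define d where "d = c + inv g c + inv g (inv g c)"
  have d_Rad: "d \<in> Rad \<gamma>"
    by (simp add: d_def c_def Rad_add inv_g_Rad)
  have "{0..<2::int} = {0, 1}" "{- 1..<0::int} = {- 1}" by auto
  then have "\<Gamma> 2 p q + \<Gamma> (- 1) p q = c + inv g c + g c"
    by (simp add: \<Gamma>_def Iset_def c_def gpow_1 gpow_minus_1)
  also have "\<dots> = g d"
    by (simp add: d_def c_def g_add_Rad Rad_add inv_g_Rad add.commute)
  finally have gd: "g d = \<Gamma> 2 p q + \<Gamma> (- 1) p q" ..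
  have "g p + g q = g (d + (p + q))"
    using arg_cong[OF inv_g_add[of p q], of g] by (simp add: d_def c_def algebra_simps)
  also have "\<dots> = g d + g (p + q)"
    by (rule g_add_Rad[OF d_Rad])
  finally show ?thesis
    by (simp add: gd algebra_simps Gamma_add_self)
qed

lemma gpow_of_nat_add:
  "gpow g (int t) (p + q) = gpow g (int t) p + gpow g (int t) q + \<Gamma> (2 * int t) p q + \<Gamma> (- int t) p q"
proof (induction t)
  case (Suc t)
  let ?A = "gpow g (int t) p" and ?B = "gpow g (int t) q"
  define E where "E = \<Gamma> (2 * int t) p q + \<Gamma> (- int t) p q"
  have step: "gpow g (int (Suc t)) x = g (gpow g (int t) x)" for x
    using gpow_succ[OF bij, of "int t" x] by (simp add: add.commute)
  have idx: "- int (Suc t) = - int t - 1"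
    by simp
  have gE: "g E = \<Gamma> (2 * int t - 1) p q + \<Gamma> (- int t - 1) p q"
    by (simp add: E_def g_add_Rad g_Gamma algebra_simps)
  have gAB: "g (?A + ?B) = g ?A + g ?B + \<Gamma> (2 * int (Suc t)) p q + \<Gamma> (2 * int t - 1) p q"
    by (simp add: g_add Gamma_gpow_both algebra_simps)
  have "gpow g (int (Suc t)) (p + q) = g (E + (?A + ?B))"
    using Suc unfolding step by (simp add: E_def algebra_simps)
  also have "\<dots> = g E + g (?A + ?B)"
    by (rule g_add_Rad) (simp add: E_def Rad_add)
  finally show ?case
    unfolding step gE gAB idx by (simp add: ac_simps)
qed simp

definition orbit_sum_Rad :: "nat \<Rightarrow> bool" where
  "orbit_sum_Rad m \<longleftrightarrow> (\<forall>x. (\<Sum>k<m. (g ^^ k) x) \<in> Rad \<gamma>)"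

lemma r_gg_enatD:
  assumes "r_gg g \<gamma> = enat r"
  shows "0 < r" "orbit_sum_Rad r" "\<And>m. 0 < m \<Longrightarrow> orbit_sum_Rad m \<Longrightarrow> r \<le> m"
proof -
  have ex: "\<exists>r. 0 < r \<and> orbit_sum_Rad r"
    using assms by (auto simp: r_gg_def orbit_sum_Rad_def split: if_splits)
  then have r: "r = (LEAST r. 0 < r \<and> orbit_sum_Rad r)"
    using assms by (auto simp: r_gg_def orbit_sum_Rad_def split: if_splits)
  show "0 < r" "orbit_sum_Rad r"
    using LeastI_ex[OF ex] r by auto
  show "\<And>m. 0 < m \<Longrightarrow> orbit_sum_Rad m \<Longrightarrow> r \<le> m"
    using r by (simp add: Least_le)
qed

lemma orbit_sum_Rad_diff:
  assumes "orbit_sum_Rad a" "orbit_sum_Rad b" "a \<le> b"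
  shows "orbit_sum_Rad (b - a)"
  unfolding orbit_sum_Rad_def
proof
  fix x
  define y where "y = gpow g (- int a) x"
  have x: "x = (g ^^ a) y"
    by (simp add: y_def gpow_cancel[OF bij] flip: gpow_of_nat)
  have "(\<Sum>k<b - a. (g ^^ k) x) = (\<Sum>k\<in>{a..<b}. (g ^^ k) y)"
    unfolding x
    by (rule sum.reindex_bij_witness[of _ "\<lambda>k. k - a" "\<lambda>k. k + a"])
       (use assms(3) in \<open>auto simp: funpow_add\<close>)
  also have "\<dots> = (\<Sum>k<b. (g ^^ k) y) - (\<Sum>k<a. (g ^^ k) y)"
    using sum.atLeastLessThan_concat[OF _ assms(3), of 0 "\<lambda>k. (g ^^ k) y"]
    by (simp add: atLeast0LessThan) (metis add_diff_cancel_left')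
  also have "\<dots> \<in> Rad \<gamma>"
    using assms(1,2) by (simp add: orbit_sum_Rad_def Rad_diff)
  finally show "(\<Sum>k<b - a. (g ^^ k) x) \<in> Rad \<gamma>" .
qed

lemma r_gg_dvd:
  assumes "r_gg g \<gamma> = enat r" "orbit_sum_Rad m"
  shows "r dvd m"
  using assms(2)
proof (induction m rule: less_induct)
  case (less m)
  note r = r_gg_enatD[OF assms(1)]
  show ?case
  proof (cases "m = 0 \<or> m = r")
    case False
    then have "r < m"
      using r(3)[OF _ less.prems] by auto
    then have "r dvd m - r"
      using less.IH[OF _ orbit_sum_Rad_diff[OF r(2) less.prems]] r(1) by simp
    with \<open>r < m\<close> show ?thesis
      by (metis dvd_diff_nat dvd_refl le_add_diff_inverse less_imp_le_nat dvd_add)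
  qed auto
qed

definition r_multiple :: "int \<Rightarrow> bool" where
  "r_multiple t \<longleftrightarrow> t = 0 \<or> enat_dvd (r_gg g \<gamma>) t"

lemma r_multiple_0 [simp]: "r_multiple 0"
  by (simp add: r_multiple_def)

lemma r_multiple_add: "r_multiple a \<Longrightarrow> r_multiple b \<Longrightarrow> r_multiple (a + b)"
  by (auto simp: r_multiple_def enat_dvd_def)

lemma r_multiple_uminus: "r_multiple a \<Longrightarrow> r_multiple (- a)"
  by (auto simp: r_multiple_def enat_dvd_def)

lemma r_multiple_diff: "r_multiple a \<Longrightarrow> r_multiple b \<Longrightarrow> r_multiple (a - b)"
  using r_multiple_add r_multiple_uminus by fastforce

lemma r_multiple_mult: "r_multiple a \<Longrightarrow> r_multiple (a * z)"
  by (auto simp: r_multiple_def enat_dvd_def)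

lemma sum_gamma_period_window:
  assumes "orbit_sum_Rad r"
  shows "(\<Sum>l\<in>{m..<m + int r}. gpow g (- l) (\<gamma> p q)) = 0"
proof -
  have "(\<Sum>l\<in>{m..<m + int r}. gpow g (- l) (\<gamma> p q)) = (\<Sum>k<r. gpow g (- (m + int k)) (\<gamma> p q))"
    by (rule sum.reindex_bij_witness[of _ "\<lambda>k. m + int k" "\<lambda>l. nat (l - m)"]) auto
  also have "\<dots> = (\<Sum>k<r. \<gamma> ((g ^^ k) (gpow g m p)) q)"
  proof (rule sum.cong[OF refl])
    fix k
    show "gpow g (- (m + int k)) (\<gamma> p q) = \<gamma> ((g ^^ k) (gpow g m p)) q"
      by (simp only: gpow_gamma) (simp add: gpow_gpow[OF bij] add.commute flip: gpow_of_nat)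
  qed
  also have "\<dots> = \<gamma> (\<Sum>k<r. (g ^^ k) (gpow g m p)) q"
    by (simp add: gamma_sum_left)
  also have "\<dots> = 0"
    using assms by (simp add: orbit_sum_Rad_def Rad_gamma_left)
  finally show ?thesis .
qed

lemma Gamma_add_r:
  assumes "r_gg g \<gamma> = enat r"
  shows "\<Gamma> (m + int r) x y = \<Gamma> m x y"
proof -
  have "\<Gamma> (m + int r) x y + \<Gamma> m x y = (\<Sum>l\<in>{m..<m + int r}. gpow g (- l) (\<gamma> x y))"
    by (simp add: Iset_def flip: sum_Iset_gamma)
  also have "\<dots> = 0"
    by (rule sum_gamma_period_window[OF r_gg_enatD(2)[OF assms]])
  finally show ?thesis
    by (simp add: add_eq_0_iff)
qed

lemma Gamma_add_r_multiple:
  assumes "r_multiple t"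
  shows "\<Gamma> (m + t) x y = \<Gamma> m x y"
proof (cases "t = 0")
  case False
  then obtain r z where r: "r_gg g \<gamma> = enat r" and t: "t = int r * z"
    using assms by (auto simp: r_multiple_def enat_dvd_def)
  have "\<Gamma> (m + int r * z) x y = \<Gamma> m x y" for m
  proof (induction z rule: int_induct[where k=0])
    case (step1 i)
    then show ?case
      using Gamma_add_r[OF r, of "m + int r * i"] by (simp add: algebra_simps)
  next
    case (step2 i)
    then show ?case
      using Gamma_add_r[OF r, of "m + int r * (i - 1)"] by (simp add: algebra_simps)
  qed simp
  with t show ?thesis by simp
qed simp

lemma Gamma_cong: "r_multiple (a - b) \<Longrightarrow> \<Gamma> a x y = \<Gamma> b x y"
  using Gamma_add_r_multiple[of "a - b" b] by simp

lemma gpow_add_r_multiple: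
  assumes "r_multiple t"
  shows "gpow g t (p + q) = gpow g t p + gpow g t q"
proof -
  have nonneg: "gpow g (int m) (p + q) = gpow g (int m) p + gpow g (int m) q"
    if "r_multiple (int m)" for m p q
    using gpow_of_nat_add[of m p q] Gamma_cong[of "2 * int m" 0] Gamma_cong[of "- int m" 0]
      r_multiple_mult[OF that, of 2] r_multiple_uminus[OF that] by (simp add: mult.commute)
  show ?thesis
  proof (cases "0 \<le> t")
    case True
    then show ?thesis
      using nonneg[of "nat t"] assms by simp
  next
    case False
    then have m: "r_multiple (int (nat (- t)))"
      using r_multiple_uminus[OF assms] by simp
    have "gpow g (- t) (gpow g t p + gpow g t q) = p + q"
      using nonneg[OF m] False by (simp add: gpow_cancel[OF bij])
    then have "gpow g t (gpow g (- t) (gpow g t p + gpow g t q)) = gpow g t (p + q)"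
      by (rule arg_cong)
    then show ?thesis
      by (simp add: gpow_cancel[OF bij])
  qed
qed

lemma r_multiple_if_orbit_sums_Rad:
  assumes "\<And>u. (\<Sum>k\<in>Iset i 0. gpow g k u) \<in> Rad \<gamma>"
  shows "r_multiple i"
proof -
  have of_orbit: "r_multiple (int m)" if pos: "0 < m" and orb: "orbit_sum_Rad m" for m
  proof -
    obtain r where r: "r_gg g \<gamma> = enat r"
    proof
      show "r_gg g \<gamma> = enat (LEAST r. 0 < r \<and> orbit_sum_Rad r)"
        using pos orb unfolding r_gg_def orbit_sum_Rad_def by auto
    qed
    then show ?thesis
      using r_gg_dvd[OF r orb] by (auto simp: r_multiple_def enat_dvd_def)
  qed
  have pos: "orbit_sum_Rad (nat i)" if "0 < i"
    unfolding orbit_sum_Rad_def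
  proof
    fix u
    have "(\<Sum>k\<in>Iset i 0. gpow g k u) = (\<Sum>k<nat i. (g ^^ k) u)"
      using that unfolding Iset_def
      by (intro sum.reindex_bij_witness[of _ "\<lambda>k. int k" "\<lambda>k. nat k"]) (auto simp: gpow_def)
    with assms show "(\<Sum>k<nat i. (g ^^ k) u) \<in> Rad \<gamma>" by metis
  qed
  have neg: "orbit_sum_Rad (nat (- i))" if "i < 0"
    unfolding orbit_sum_Rad_def
  proof
    fix w
    have "(\<Sum>k\<in>Iset i 0. gpow g k (gpow g (- i) w)) = (\<Sum>k<nat (- i). (g ^^ k) w)"
      using that unfolding Iset_def
      by (intro sum.reindex_bij_witness[of _ "\<lambda>k. int k + i" "\<lambda>k. nat (k - i)"])
         (auto simp: gpow_gpow[OF bij] simp flip: gpow_of_nat)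
    with assms show "(\<Sum>k<nat (- i). (g ^^ k) w) \<in> Rad \<gamma>" by metis
  qed
  consider "i = 0" | "0 < i" | "i < 0"
    by linarith
  then show ?thesis
  proof cases
    case 2
    then show ?thesis using of_orbit[OF _ pos] by simp
  next
    case 3
    then show ?thesis using of_orbit[OF _ neg] r_multiple_uminus[of "int (nat (- i))"] by simp
  qed simp
qed

end

locale semidirect_loop = constr_pair +
  fixes n :: nat
  assumes order_compat: "0 < n \<Longrightarrow> gpow g (int n) = id \<and> enat_dvd (r_gg g \<gamma>) (int n)"
begin

abbreviation Q :: "(int \<times> 'a) set" where
  "Q \<equiv> sd_carrier n"

abbreviation mult :: "int \<times> 'a \<Rightarrow> int \<times> 'a \<Rightarrow> int \<times> 'a" where
  "mult \<equiv> sd_mult n g \<gamma>"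

lemma gpow_n: "gpow g (int n) = id"
  using order_compat by (cases "n = 0") auto

lemma r_multiple_n: "r_multiple (int n)"
  using order_compat by (cases "n = 0") (auto simp: r_multiple_def)

lemma r_multiple_mod_diff: "r_multiple (a mod int n - a)"
proof -
  have "a mod int n - a = int n * (- (a div int n))"
    by (simp add: minus_div_mult_eq_mod[symmetric] algebra_simps)
  then show ?thesis
    by (simp only: r_multiple_mult[OF r_multiple_n])
qed

lemma gpow_uminus_mod: "gpow g (- (a mod int n)) = gpow g (- a)"
proof -
  have "- (a mod int n) = - a + int n * (a div int n)"
    by (simp add: minus_div_mult_eq_mod[symmetric] algebra_simps)
  then show ?thesis
    by (simp only: gpow_add_period[OF bij gpow_n])
qed

lemma carrier_mod: "(i, x) \<in> Q \<Longrightarrow> i mod int n = i"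
  by (auto simp: sd_carrier_def)

lemma mult_assoc_left:
  assumes x: "x \<in> Rad \<gamma>" and i: "r_multiple i"
  shows "mult (i, x) (mult (j, u) (k, v)) = mult (mult (i, x) (j, u)) (k, v)"
proof -
  have jx: "gpow g (- j) x \<in> Rad \<gamma>"
    by (rule gpow_Rad[OF x])
  have L: "mult (i, x) (mult (j, u) (k, v)) = ((i + (j + k) mod int n) mod int n,
      gpow g (- ((j + k) mod int n)) x + (gpow g (- k) u + v + \<Gamma> (j + k) u v + \<Gamma> (- k) u v))"
    by (simp add: sd_mult_Gamma Gamma_Rad_left x)
  have R: "mult (mult (i, x) (j, u)) (k, v) = (((i + j) mod int n + k) mod int n,
      gpow g (- k) (gpow g (- j) x + u) + v + \<Gamma> ((i + j) mod int n + k) (gpow g (- j) x + u) v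
        + \<Gamma> (- k) (gpow g (- j) x + u) v)"
    by (simp add: sd_mult_Gamma Gamma_Rad_left x)
  have e1: "gpow g (- k) (gpow g (- j) x + u) = gpow g (- ((j + k) mod int n)) x + gpow g (- k) u"
  proof -
    have "gpow g (- k + - j) = gpow g (- ((j + k) mod int n))"
      by (simp add: gpow_uminus_mod add.commute)
    then show ?thesis
      by (simp only: gpow_add_Rad[OF jx] gpow_gpow[OF bij])
  qed
  have e2: "\<Gamma> ((i + j) mod int n + k) u v = \<Gamma> (j + k) u v"
    by (rule Gamma_cong)
       (use r_multiple_add[OF r_multiple_mod_diff[of "i + j"] i] in \<open>simp add: algebra_simps\<close>)
  have e3: "(i + (j + k) mod int n) mod int n = ((i + j) mod int n + k) mod int n"
    by (simp add: mod_add_right_eq mod_add_left_eq add.assoc)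
  show ?thesis
    unfolding L R e1 Gamma_add_left Gamma_Rad_left[OF jx] e2 e3 by (simp add: algebra_simps)
qed

lemma mult_assoc_middle:
  assumes x: "x \<in> Rad \<gamma>" and i: "r_multiple i"
  shows "mult (j, u) (mult (i, x) (k, v)) = mult (mult (j, u) (i, x)) (k, v)"
proof -
  have kx: "gpow g (- k) x \<in> Rad \<gamma>"
    by (rule gpow_Rad[OF x])
  have L: "mult (j, u) (mult (i, x) (k, v)) = ((j + (i + k) mod int n) mod int n,
      gpow g (- ((i + k) mod int n)) u + (gpow g (- k) x + v)
        + \<Gamma> (j + (i + k) mod int n) u (gpow g (- k) x + v)
        + \<Gamma> (- ((i + k) mod int n)) u (gpow g (- k) x + v))"
    by (simp add: sd_mult_Gamma Gamma_Rad_left x)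
  have R: "mult (mult (j, u) (i, x)) (k, v) = (((j + i) mod int n + k) mod int n,
      gpow g (- k) (gpow g (- i) u + x) + v + \<Gamma> ((j + i) mod int n + k) (gpow g (- i) u + x) v
        + \<Gamma> (- k) (gpow g (- i) u + x) v)"
    by (simp add: sd_mult_Gamma Gamma_Rad_right x)
  have e1: "gpow g (- k) (gpow g (- i) u + x) = gpow g (- ((i + k) mod int n)) u + gpow g (- k) x"
  proof -
    have "gpow g (- k + - i) = gpow g (- ((i + k) mod int n))"
      by (simp add: gpow_uminus_mod add.commute)
    then show ?thesis
      by (simp only: gpow_add_Rad_right[OF x] gpow_gpow[OF bij])
  qed
  have e2: "\<Gamma> ((j + i) mod int n + k + - i) u v = \<Gamma> (j + (i + k) mod int n) u v"
    by (rule Gamma_cong)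
       (use r_multiple_diff[OF r_multiple_diff[OF r_multiple_mod_diff[of "j + i"]
          r_multiple_mod_diff[of "i + k"]] i] in \<open>simp add: algebra_simps\<close>)
  have e3: "\<Gamma> (- k + - i) u v = \<Gamma> (- ((i + k) mod int n)) u v"
    by (rule Gamma_cong) (use r_multiple_mod_diff[of "i + k"] in \<open>simp add: algebra_simps\<close>)
  have e4: "((j + i) mod int n + k) mod int n = (j + (i + k) mod int n) mod int n"
    by (simp add: mod_add_right_eq mod_add_left_eq algebra_simps)
  show ?thesis
    unfolding L R e1 Gamma_add_left Gamma_add_right Gamma_Rad_left[OF x] Gamma_Rad_right[OF kx]
      Gamma_gpow_left e2 e3 e4
    by (simp add: algebra_simps)
qed

lemma mult_assoc_right:
  assumes x: "x \<in> Rad \<gamma>" and i: "r_multiple i"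
  shows "mult (j, u) (mult (k, v) (i, x)) = mult (mult (j, u) (k, v)) (i, x)"
proof -
  have additive: "gpow g (- i) (p + q) = gpow g (- i) p + gpow g (- i) q" for p q
    by (rule gpow_add_r_multiple[OF r_multiple_uminus[OF i]])
  have L: "mult (j, u) (mult (k, v) (i, x)) = ((j + (k + i) mod int n) mod int n,
      gpow g (- ((k + i) mod int n)) u + (gpow g (- i) v + x)
        + \<Gamma> (j + (k + i) mod int n) u (gpow g (- i) v + x)
        + \<Gamma> (- ((k + i) mod int n)) u (gpow g (- i) v + x))"
    by (simp add: sd_mult_Gamma Gamma_Rad_right x)
  have R: "mult (mult (j, u) (k, v)) (i, x) = (((j + k) mod int n + i) mod int n,
      gpow g (- i) (gpow g (- k) u + v + \<Gamma> (j + k) u v + \<Gamma> (- k) u v) + x)"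
    by (simp add: sd_mult_Gamma Gamma_Rad_right x)
  have e1: "gpow g (- i) (gpow g (- k) u) = gpow g (- ((k + i) mod int n)) u"
    by (simp add: gpow_gpow[OF bij] gpow_uminus_mod add.commute)
  have e2: "\<Gamma> (j + (k + i) mod int n + - i) u v = \<Gamma> (j + k + i) u v"
    by (rule Gamma_cong)
       (use r_multiple_diff[OF r_multiple_mod_diff[of "k + i"] i] in \<open>simp add: algebra_simps\<close>)
  have e3: "\<Gamma> (- ((k + i) mod int n) + - i) u v = \<Gamma> (- k + i) u v"
    by (rule Gamma_cong)
       (use r_multiple_add[OF r_multiple_uminus[OF r_multiple_mod_diff[of "k + i"]]
          r_multiple_mult[OF i, of "- 3"]] in \<open>simp add: algebra_simps\<close>)
  have e4: "((j + k) mod int n + i) mod int n = (j + (k + i) mod int n) mod int n"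
    by (simp add: mod_add_right_eq mod_add_left_eq algebra_simps)
  show ?thesis
    unfolding L R additive e1 gpow_Gamma Gamma_gpow_left Gamma_add_right Gamma_Rad_right[OF x]
      Gamma_gpow_right e2 e3 e4
    by (simp add: algebra_simps)
qed

lemma zero_in_carrier: "(0, w) \<in> Q"
  by (auto simp: sd_carrier_def)

lemma nucleus_r_multiple:
  assumes N: "(i, x) \<in> loop_nucleus Q mult"
  shows "r_multiple i"
proof (rule r_multiple_if_orbit_sums_Rad)
  fix u
  have i: "i mod int n = i"
    using N by (intro carrier_mod[of i x]) (simp add: loop_nucleus_def)
  have "\<Gamma> i u v = 0" for v
  proof -
    have "mult (i, x) (mult (0, u) (0, v)) = mult (mult (i, x) (0, u)) (0, v)"
      using N zero_in_carrier by (simp add: loop_nucleus_def)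
    then show ?thesis
      by (simp add: sd_mult_Gamma i Gamma_add_left Gamma_add_right Gamma_Rad_left)
  qed
  then show "(\<Sum>k\<in>Iset i 0. gpow g k u) \<in> Rad \<gamma>"
    by (simp add: Rad_def Gamma_eq_gamma_sum)
qed

lemma nucleus_Rad:
  assumes N: "(i, x) \<in> loop_nucleus Q mult"
  shows "x \<in> Rad \<gamma>"
proof (cases "n = 1")
  case True
  \<comment> \<open>then \<open>(b,0)\<close> is not available, but \<open>r = 1\<close> and \<open>Rad(\<gamma>)\<close> is everything\<close>
  then obtain r where "r_gg g \<gamma> = enat r" "int r dvd 1"
    using order_compat by (auto simp: enat_dvd_def)
  then show ?thesis
    using r_gg_enatD(2)[of 1] by (simp add: orbit_sum_Rad_def)
next
  case False
  have i: "i mod int n = i"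
    using N by (intro carrier_mod[of i x]) (simp add: loop_nucleus_def)
  have one: "(1, w) \<in> Q" "1 mod int n = 1" for w
    using False by (auto simp: sd_carrier_def) (cases "n = 0"; simp)
  have "\<gamma> x v = 0" for v
  proof -
    have "mult (i, x) (mult (1, 0) (0, v)) = mult (mult (i, x) (1, 0)) (0, v)"
      using N one zero_in_carrier by (simp add: loop_nucleus_def)
    then have "\<Gamma> (i + 1) x v = \<Gamma> ((i + 1) mod int n - 1) x v"
      by (simp add: sd_mult_Gamma one Gamma_add_left Gamma_gpow_left)
    also have "\<dots> = \<Gamma> i x v"
      by (rule Gamma_cong) (use r_multiple_mod_diff[of "i + 1"] in \<open>simp add: algebra_simps\<close>)
    finally have "gpow g (- i) (\<gamma> x v) = 0"
      by (simp add: Gamma_succ)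
    then show ?thesis
      using gpow_cancel(2)[OF bij, of i "\<gamma> x v"] by simp
  qed
  then show ?thesis
    by (simp add: Rad_def)
qed

lemma commutes_with_carrier_iff:
  assumes x: "x \<in> Rad \<gamma>"
  shows "(\<forall>y\<in>Q. mult (i, x) y = mult y (i, x)) \<longleftrightarrow> gpow g i = id \<and> g x = x"
proof
  assume comm: "\<forall>y\<in>Q. mult (i, x) y = mult y (i, x)"
  have "gpow g (- i) u = u" for u
  proof -
    have "mult (i, x) (0, u) = mult (0, u) (i, x)"
      using comm zero_in_carrier by blast
    then show ?thesis
      by (simp add: sd_mult_Gamma Gamma_Rad_left Gamma_Rad_right x add.commute)
  qed
  then have "gpow g i = id"
    by (metis gpow_cancel(2)[OF bij] eq_id_iff)
  moreover have "g x = x"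
  proof (cases "n = 1")
    case True
    then show ?thesis
      using order_compat by (simp add: gpow_1)
  next
    case False
    then have "(1, 0) \<in> Q"
      by (auto simp: sd_carrier_def)
    with comm have "mult (i, x) (1, 0) = mult (1, 0) (i, x)"
      by blast
    then have "inv g x = x"
      by (simp add: sd_mult_Gamma Gamma_Rad_left Gamma_Rad_right x gpow_minus_1 add.commute)
    then show ?thesis
      by (metis g_inv_g)
  qed
  ultimately show "gpow g i = id \<and> g x = x" ..
next
  assume fixed: "gpow g i = id \<and> g x = x"
  then have "gpow g (- i) u = u" for u
    using gpow_cancel(1)[OF bij, of i u] by simp
  with fixed show "\<forall>y\<in>Q. mult (i, x) y = mult y (i, x)"
    by (auto simp: sd_mult_Gamma Gamma_Rad_left Gamma_Rad_right x gpow_fixed_point[OF bij] add.commute)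
qed

lemma loop_nucleus_eq:
  "loop_nucleus Q mult = {(i, x) \<in> Q. x \<in> Rad \<gamma> \<and> r_multiple i}"
proof (intro set_eqI iffI)
  fix a
  assume "a \<in> loop_nucleus Q mult"
  then show "a \<in> {(i, x) \<in> Q. x \<in> Rad \<gamma> \<and> r_multiple i}"
    using nucleus_Rad nucleus_r_multiple by (cases a) (auto simp: loop_nucleus_def)
next
  fix a
  assume "a \<in> {(i, x) \<in> Q. x \<in> Rad \<gamma> \<and> r_multiple i}"
  then show "a \<in> loop_nucleus Q mult"
    by (cases a) (auto simp: loop_nucleus_def mult_assoc_left mult_assoc_middle mult_assoc_right)
qed

lemma loop_center_eq:
  "loop_center Q mult = {(i, x) \<in> loop_nucleus Q mult. gpow g i = id \<and> g x = x}"
  using commutes_with_carrier_iff nucleus_Rad by (auto simp: loop_center_def)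

end

theorem mainTheorem8:
  fixes g :: "'a::ab_group_add \<Rightarrow> 'a" and \<gamma> :: "'a \<Rightarrow> 'a \<Rightarrow> 'a" and n :: nat
  assumes "construction_pair g \<gamma>"
    and "0 < n \<Longrightarrow> gpow g (int n) = id \<and> enat_dvd (r_gg g \<gamma>) (int n)"
  shows "loop_nucleus (sd_carrier n) (sd_mult n g \<gamma>) =
           {(i, x) \<in> sd_carrier n. x \<in> Rad \<gamma> \<and> (i = 0 \<or> enat_dvd (r_gg g \<gamma>) i)} \<and>
         loop_center (sd_carrier n) (sd_mult n g \<gamma>) =
           {(i, x) \<in> loop_nucleus (sd_carrier n) (sd_mult n g \<gamma>). gpow g i = id \<and> g x = x}"
proof -
  interpret semidirect_loop g \<gamma> n
    by unfold_locales (fact assms)+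
  show ?thesis
    using loop_nucleus_eq loop_center_eq by (simp add: r_multiple_def)
qed

end
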